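(* Let $\Theta'$ be obtained from $\Theta_4$ by subdividing one edge with a bivalent vertex $v$, and let $\Theta_v$ be the explosion of $\Theta'$ at $v$; thus $\Theta_v$ has two $4$-valent vertices $u_1,u_2$ joined by three edges, and one further edge (a tail) at each $u_i$. In the exact sequence \[\cdots\to H_2(B_3(\Theta_v))\xrightarrow{\iota_*}H_2(B_3(\Theta'))\xrightarrow{\psi}H_1(B_2(\Theta_v))\xrightarrow{\delta}H_1(B_3(\Theta_v))\to\cdots\] the map $\psi$ sends a generator of $H_2(B_3(\Theta'))\cong H_2(B_3(\Theta_4))\cong\mathbb{Z}$ to $\pm$ the star class at $u_1$ determined by the three half-edges at $u_1$ lying on the three edges joining $u_1$ and $u_2$ (which is, up to sign, the unique non-rigid star class in $H_1(B_2(\Theta_v))$).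
   Context: Graphs are finite $1$-dimensional CW complexes; $B_k(\Gamma)$ is the configuration space of $k$ unordered points, and $H_*(B(\Gamma))$ is a module over $\mathbb{Z}[E]$ ($E$ = edges) via edge stabilization, equivalently the homology of the Świątkowski complex $S(\Gamma)=\mathbb{Z}[E]\otimes\bigotimes_v\mathbb{Z}\langle\varnothing,v,h\in H(v)\rangle$ with $\partial h=e(h)-v(h)$, bigraded by degree ($|h|=1$, others $0$) and weight ($|v|=|e|=|h|=1$, $|\varnothing|=0$). The reduced complex $\widetilde S(\Gamma)$ uses at each vertex the span of $\varnothing$ and differences of half-edges. Explosion $\Gamma_v$ of a vertex $v$: replace $v$ by $d(v)$ univalent vertices, one per half-edge at $v$. For a bivalent vertex $v$ with half-edges $h_0,h$, there is a natural exact sequence $\cdots\to H_i(B_k(\Gamma_v))\xrightarrow{\iota_*}H_i(B_k(\Gamma))\xrightarrow{\psi}H_{i-1}(B_{k-1}(\Gamma_v))\xrightarrow{\delta}H_{i-1}(B_k(\Gamma_v))\to\cdots$, where $\iota_*$ is induced by the inclusion, $\psi$ is induced by the chain map on reduced complexes sending $b+(h-h_0)a\mapsto a$ ($a,b$ involving no half-edge generators at $v$), and $\delta$ is multiplication by $e(h)-e(h_0)$. A star class is the class of a star cycle $e_3(h_1-h_2)+e_2(h_3-h_1)+e_1(h_2-h_3)$ for distinct half-edges $h_1,h_2,h_3$ at a vertex $u$ (its support), $e_i=e(h_i)$. A star cycle with support $u$ is rigid if its three half-edges do not all lie in the same connected component of $\Gamma_u$; a star class is rigid if it has a rigid representing star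 cycle, non-rigid otherwise. *)

theory Defs
  imports Main
begin

text \<open>Vertices are natural numbers; their natural
 order fixes the ordering of tensor factors (Koszul signs) in the
 Swiatkowski complex.\<close>

record graph =
  verts  :: "nat set"
  edges  :: "nat set"
  halves :: "nat set"
  hv     :: "nat \<Rightarrow> nat"
  he     :: "nat \<Rightarrow> nat"

definition H_at :: "graph \<Rightarrow> nat \<Rightarrow> nat set" where
  "H_at G v = {h \<in> halves G. hv G h = v}"

datatype gen = Emp | Vtx | Hlf nat

fun isHlf :: "gen \<Rightarrow> bool" where
  "isHlf (Hlf h) = True" | "isHlf _ = False"

text \<open>A basis monomial: an edge monomial (exponent vector) together with a choice of
 local generator at every vertex.\<close>
type_synonym mono = "(nat \<Rightarrow> nat) \<times> (nat \<Rightarrow> gen)"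
type_synonym chain = "mono \<Rightarrow> int"

definition valid_mono :: "graph \<Rightarrow> mono \<Rightarrow> bool" where
  "valid_mono G b \<longleftrightarrow>
     (\<forall>e. fst b e \<noteq> 0 \<longrightarrow> e \<in> edges G) \<and>
     (\<forall>w. w \<notin> verts G \<longrightarrow> snd b w = Emp) \<and>
     (\<forall>w h. snd b w = Hlf h \<longrightarrow> h \<in> H_at G w)"

definition mdeg :: "graph \<Rightarrow> mono \<Rightarrow> nat" where
  "mdeg G b = card {w \<in> verts G. isHlf (snd b w)}"

definition mwt :: "graph \<Rightarrow> mono \<Rightarrow> nat" where
  "mwt G b = (\<Sum>e\<in>edges G. fst b e) + card {w \<in> verts G. snd b w \<noteq> Emp}"

definition ind :: "mono \<Rightarrow> chain" where
  "ind b = (\<lambda>b'. if b' = b then 1 else 0)"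

definition ksign :: "graph \<Rightarrow> (nat \<Rightarrow> gen) \<Rightarrow> nat \<Rightarrow> int" where
  "ksign G \<sigma> w = (-1) ^ card {w' \<in> verts G. w' < w \<and> isHlf (\<sigma> w')}"

text \<open>Differential on monomials, induced by d h = e(h) - v(h) with Koszul signs.\<close>
definition bd_mono :: "graph \<Rightarrow> mono \<Rightarrow> chain" where
  "bd_mono G b = (\<lambda>b'. \<Sum>w\<in>verts G.
      (case snd b w of
         Hlf h \<Rightarrow> ksign G (snd b) w *
            (ind ((fst b)(he G h := fst b (he G h) + 1), (snd b)(w := Emp)) b'
             - ind (fst b, (snd b)(w := Vtx)) b')
       | _ \<Rightarrow> 0))"

definition supp :: "chain \<Rightarrow> mono set" where
  "supp c = {b. c b \<noteq> 0}"

definition bd :: "graph \<Rightarrow> chain \<Rightarrow> chain" where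
  "bd G c = (\<lambda>b'. \<Sum>b\<in>supp c. c b * bd_mono G b b')"

text \<open>Chains of S(G) in degree i and weight k (weight k = k particles).\<close>
definition is_chain :: "graph \<Rightarrow> nat \<Rightarrow> nat \<Rightarrow> chain \<Rightarrow> bool" where
  "is_chain G i k c \<longleftrightarrow> finite (supp c) \<and>
     (\<forall>b\<in>supp c. valid_mono G b \<and> mdeg G b = i \<and> mwt G b = k)"

definition is_cycle :: "graph \<Rightarrow> nat \<Rightarrow> nat \<Rightarrow> chain \<Rightarrow> bool" where
  "is_cycle G i k c \<longleftrightarrow> is_chain G i k c \<and> bd G c = (\<lambda>_. 0)"

definition homologous :: "graph \<Rightarrow> nat \<Rightarrow> nat \<Rightarrow> chain \<Rightarrow> chain \<Rightarrow> bool" where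
  "homologous G i k c1 c2 \<longleftrightarrow>
     (\<exists>d. is_chain G (Suc i) k d \<and> (\<lambda>b. c1 b - c2 b) = bd G d)"

text \<open>A chain lies in the subcomplex which is reduced at the bivalent vertex v with
 half-edges h0, h: its v-factor is the empty symbol or a multiple of (h - h0),
 i.e. it has the form b + (h - h0) a.\<close>
definition reduced_at :: "nat \<Rightarrow> nat \<Rightarrow> nat \<Rightarrow> chain \<Rightarrow> bool" where
  "reduced_at v h0 h c \<longleftrightarrow>
     (\<forall>m \<sigma>. c (m, \<sigma>(v := Vtx)) = 0 \<and>
            c (m, \<sigma>(v := Hlf h0)) = - c (m, \<sigma>(v := Hlf h)) \<and>
            (\<forall>h'. h' \<noteq> h \<and> h' \<noteq> h0 \<longrightarrow> c (m, \<sigma>(v := Hlf h')) = 0))"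

text \<open>psi: b + (h - h0) a \<mapsto> a.\<close>
definition psi :: "nat \<Rightarrow> nat \<Rightarrow> chain \<Rightarrow> chain" where
  "psi v h c = (\<lambda>(m, \<sigma>). if \<sigma> v = Emp then c (m, \<sigma>(v := Hlf h)) else 0)"

text \<open>Explosion at v: v is replaced by one new univalent vertex per half-edge at v;
 the new vertex for half-edge h is named new h (new must be injective and avoid
 the other vertices).\<close>
definition explode :: "graph \<Rightarrow> nat \<Rightarrow> (nat \<Rightarrow> nat) \<Rightarrow> graph" where
  "explode G v new = G\<lparr> verts := (verts G - {v}) \<union> new ` H_at G v,
                        hv := (\<lambda>x. if hv G x = v then new x else hv G x) \<rparr>"

definition star_cycle :: "graph \<Rightarrow> nat \<Rightarrow> nat \<Rightarrow> nat \<Rightarrow> nat \<Rightarrow> chain" where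
  "star_cycle G u h1 h2 h3 = (\<lambda>b.
      let t = (\<lambda>e x. ind ((\<lambda>_. 0)(e := 1), (\<lambda>_. Emp)(u := Hlf x)) b) in
      t (he G h3) h1 - t (he G h3) h2 + t (he G h2) h3 - t (he G h2) h1
      + t (he G h1) h2 - t (he G h1) h3)"

definition Theta4 :: graph where
  "Theta4 = \<lparr> verts = {0,1}, edges = {0..3}, halves = {0..7},
             hv = (\<lambda>h. h mod 2), he = (\<lambda>h. h div 2) \<rparr>"

text \<open>Theta': Theta_4 with edge 3 subdivided by the bivalent vertex 2:
 edge 3 now joins vertex 0 (half-edge 6) and vertex 2 (half-edge 7), new edge 4
 joins vertex 2 (half-edge 8) and vertex 1 (half-edge 9).\<close>
definition Theta' :: graph where
  "Theta' = \<lparr> verts = {0,1,2}, edges = {0..4}, halves = {0..9},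
             hv = (\<lambda>h. if h < 6 then h mod 2
                        else if h = 6 then 0 else if h = 9 then 1 else 2),
             he = (\<lambda>h. h div 2) \<rparr>"

text \<open>Theta_v: explosion of Theta' at v = 2; half-edge 7 goes to new vertex 17 and
 half-edge 8 to new vertex 18 (tails at u1 = 0 and u2 = 1).\<close>
definition Theta_v :: graph where
  "Theta_v = explode Theta' 2 (\<lambda>h. h + 10)"

end

theory Submission imports Defs begin

text \<open>
  Write \<open>h\<^sub>j\<close> for the half-edges of \<open>\<Theta>'\<close>. The explicit degree-2 cycle \<open>z\<^sub>0\<close> (\<open>theta_cycle\<close>)
  is chosen so that its part carrying a half-edge at \<open>v\<close> is \<open>(h\<^sub>8 - h\<^sub>7)\<close> times the star cycle
  at \<open>u\<^sub>1\<close>; hence \<open>\<psi> z\<^sub>0\<close> is that star cycle. Since \<open>z\<close> generates, \<open>z\<^sub>0 - n z = \<partial>D\<close> for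
  some \<open>n\<close> and \<open>D\<close>, and \<open>\<psi>\<close> commutes with \<open>\<partial>\<close> on \<open>D\<close>, so \<open>\<psi> z\<^sub>0 - n \<psi> z = \<partial>(\<psi> D)\<close>.
  Every degree-3 chain of \<open>\<Theta>'\<close> has weight 3 and no edge factor, so \<open>\<psi> D\<close> is a combination
  of products of one half-edge at \<open>u\<^sub>1\<close> and one at \<open>u\<^sub>2\<close>. A linear functional (\<open>star_test\<close>)
  vanishing on the boundaries of all such products but equal to \<open>-1\<close> on the star cycle
  gives \<open>n \<cdot> star_test (\<psi> z) = -1\<close>; thus \<open>n = \<plusminus>1\<close> and \<open>\<psi> z\<close> is homologous to \<open>n\<close> times the star cycle.
\<close>

definition lincomb :: "(int \<times> mono) list \<Rightarrow> chain" where
  "lincomb L = (\<lambda>b. sum_list (map (\<lambda>(k, X). k * ind X b) L))"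

lemma supp_lincomb: "supp (lincomb L) \<subseteq> snd ` set L"
proof (induction L)
  case Nil
  then show ?case by (simp add: supp_def lincomb_def)
next
  case (Cons p L)
  then show ?case
    by (cases p) (auto simp: supp_def lincomb_def ind_def split: if_splits)
qed

lemma bd_eq_sum_superset:
  assumes "finite S" and "supp c \<subseteq> S"
  shows "bd G c b' = (\<Sum>b\<in>S. c b * bd_mono G b b')"
  unfolding bd_def using assms by (intro sum.mono_neutral_left) (auto simp: supp_def)

lemma sum_lincomb_mult:
  assumes "finite S" and "snd ` set L \<subseteq> S"
  shows "(\<Sum>b\<in>S. lincomb L b * f b) = sum_list (map (\<lambda>(k, X). k * f X) L)"
  using assms(2)
proof (induction L)
  case Nil
  then show ?case by (simp add: lincomb_def)
next
  case (Cons p L)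
  obtain k X where p: "p = (k, X)" by (cases p)
  have X: "X \<in> S" using Cons.prems p by auto
  have "(\<Sum>b\<in>S. lincomb (p # L) b * f b) = k * (\<Sum>b\<in>S. ind X b * f b) + (\<Sum>b\<in>S. lincomb L b * f b)"
    by (simp add: p lincomb_def sum.distrib sum_distrib_left algebra_simps)
  also have "(\<Sum>b\<in>S. ind X b * f b) = (\<Sum>b\<in>S. if b = X then f X else 0)"
    by (rule sum.cong) (auto simp: ind_def)
  also have "\<dots> = f X"
    using X assms(1) by simp
  finally show ?case using Cons by (simp add: p)
qed

lemma bd_lincomb: "bd G (lincomb L) b' = sum_list (map (\<lambda>(k, X). k * bd_mono G X b') L)"
  using bd_eq_sum_superset[OF _ supp_lincomb] sum_lincomb_mult[of "snd ` set L" L] by simp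

lemma supp_scale: "k \<noteq> 0 \<Longrightarrow> supp (\<lambda>b. k * c b) = supp c"
  by (auto simp: supp_def)

lemma bd_scale: "k \<noteq> 0 \<Longrightarrow> bd G (\<lambda>b. k * c b) = (\<lambda>b'. k * bd G c b')"
  by (simp add: bd_def supp_scale sum_distrib_left mult.assoc)

lemma homologous_unit_swap:
  assumes "k = 1 \<or> k = -1" and "is_chain G (Suc i) w d" and "(\<lambda>b. c1 b - k * c2 b) = bd G d"
  shows "homologous G i w c2 (\<lambda>b. k * c1 b)"
proof -
  have "-k \<noteq> 0" using assms(1) by auto
  have "(\<lambda>b. c2 b - k * c1 b) = (\<lambda>b. - k * (c1 b - k * c2 b))"
    using assms(1) by (auto simp: algebra_simps)
  also have "\<dots> = bd G (\<lambda>b. - k * d b)"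
    unfolding bd_scale[OF \<open>-k \<noteq> 0\<close>] assms(3)[symmetric] by simp
  finally have "(\<lambda>b. c2 b - k * c1 b) = bd G (\<lambda>b. - k * d b)" .
  moreover have "is_chain G (Suc i) w (\<lambda>b. - k * d b)"
    using assms(2) unfolding is_chain_def supp_scale[OF \<open>-k \<noteq> 0\<close>] .
  ultimately show ?thesis
    unfolding homologous_def by (intro exI[of _ "\<lambda>b. - k * d b"]) simp
qed

definition clear_at :: "nat \<Rightarrow> mono \<Rightarrow> mono" where
  "clear_at v b = (fst b, (snd b)(v := Emp))"

lemma ind_fun_upd_Hlf:
  "\<sigma> v = Emp \<Longrightarrow> ind (m0, \<sigma>0) (m, \<sigma>(v := Hlf h)) =
     (if \<sigma>0 v = Hlf h then ind (m0, \<sigma>0(v := Emp)) (m, \<sigma>) else 0)"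
  by (auto simp: ind_def fun_eq_iff)

lemma ind_eq_0_of_snd_ne: "snd b v \<noteq> snd X v \<Longrightarrow> ind X b = 0"
  by (auto simp: ind_def)

lemma psi_diff_scale: "psi v h (\<lambda>b. c b - k * d b) = (\<lambda>b. psi v h c b - k * psi v h d b)"
  by (auto simp: psi_def)

lemma psi_clear_at: "snd b v = Hlf h \<Longrightarrow> psi v h D (clear_at v b) = D b"
  by (cases b) (simp add: psi_def clear_at_def fun_upd_idem)

lemma inj_on_clear_at: "inj_on (clear_at v) {b. snd b v = Hlf h}"
proof (rule inj_onI)
  fix a b assume "a \<in> {b. snd b v = Hlf h}" "b \<in> {b. snd b v = Hlf h}" "clear_at v a = clear_at v b"
  then have "fst a = fst b" and "snd a w = snd b w" for w
    by (cases "w = v"; simp add: clear_at_def fun_eq_iff; metis fun_upd_other)+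
  then show "a = b" by (simp add: prod_eq_iff fun_eq_iff)
qed

lemma supp_psi: "supp (psi v h D) = clear_at v ` {b \<in> supp D. snd b v = Hlf h}"
proof (rule set_eqI)
  fix c :: mono
  obtain m \<sigma> where c: "c = (m, \<sigma>)" by (cases c)
  show "c \<in> supp (psi v h D) \<longleftrightarrow> c \<in> clear_at v ` {b \<in> supp D. snd b v = Hlf h}"
  proof
    assume "c \<in> supp (psi v h D)"
    then have "\<sigma> v = Emp" and "D (m, \<sigma>(v := Hlf h)) \<noteq> 0"
      by (auto simp: supp_def psi_def c split: if_splits)
    moreover from \<open>\<sigma> v = Emp\<close> have "c = clear_at v (m, \<sigma>(v := Hlf h))"
      by (auto simp: c clear_at_def fun_eq_iff)
    ultimately show "c \<in> clear_at v ` {b \<in> supp D. snd b v = Hlf h}"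
      by (auto simp: supp_def)
  next
    assume "c \<in> clear_at v ` {b \<in> supp D. snd b v = Hlf h}"
    then show "c \<in> supp (psi v h D)"
      by (auto simp: supp_def psi_clear_at)
  qed
qed

lemma psi_bd_eq_bd_psi:
  assumes fin: "finite (supp D)"
    and lift: "\<And>b m \<sigma>. b \<in> supp D \<Longrightarrow> \<sigma> v = Emp \<Longrightarrow>
       bd_mono G b (m, \<sigma>(v := Hlf h)) =
         (if snd b v = Hlf h then bd_mono G' (clear_at v b) (m, \<sigma>) else 0)"
    and vanish: "\<And>b c. b \<in> supp D \<Longrightarrow> snd b v = Hlf h \<Longrightarrow> snd c v \<noteq> Emp \<Longrightarrow>
       bd_mono G' (clear_at v b) c = 0"
  shows "psi v h (bd G D) = bd G' (psi v h D)"
proof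
  fix c :: mono
  obtain m \<sigma> where c: "c = (m, \<sigma>)" by (cases c)
  let ?S = "{b \<in> supp D. snd b v = Hlf h}"
  have reindex: "bd G' (psi v h D) c = (\<Sum>b\<in>?S. D b * bd_mono G' (clear_at v b) c)"
    unfolding bd_def supp_psi
    by (subst sum.reindex) (auto intro: inj_on_subset[OF inj_on_clear_at] simp: psi_clear_at)
  show "psi v h (bd G D) c = bd G' (psi v h D) c"
  proof (cases "\<sigma> v = Emp")
    case True
    have "psi v h (bd G D) c = (\<Sum>b\<in>supp D. D b * bd_mono G b (m, \<sigma>(v := Hlf h)))"
      using True by (simp add: c psi_def bd_def)
    also have "\<dots> = (\<Sum>b\<in>supp D. if snd b v = Hlf h then D b * bd_mono G' (clear_at v b) c else 0)"
      using lift True by (intro sum.cong) (auto simp: c)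
    also have "\<dots> = bd G' (psi v h D) c"
      unfolding reindex by (simp add: sum.inter_filter[OF fin])
    finally show ?thesis .
  next
    case False
    then show ?thesis
      unfolding reindex using vanish by (simp add: c psi_def)
  qed
qed

definition exps :: "nat list \<Rightarrow> nat \<Rightarrow> nat" where
  "exps es e = (if e < length es then es ! e else 0)"

definition gens :: "gen list \<Rightarrow> nat \<Rightarrow> gen" where
  "gens gs w = (if w < length gs then gs ! w else Emp)"

lemma exps_simps [simp]:
  "exps [] n = 0" "exps (g # gs) 0 = g" "exps (g # gs) (Suc n) = exps gs n"
  "exps (g # gs) (numeral k) = exps gs (pred_numeral k)"
  by (auto simp: exps_def numeral_eq_Suc)

lemma gens_simps [simp]:
  "gens [] n = Emp" "gens (g # gs) 0 = g" "gens (g # gs) (Suc n) = gens gs n"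
  "gens (g # gs) (numeral k) = gens gs (pred_numeral k)"
  by (auto simp: gens_def numeral_eq_Suc)

lemma exps_upd [simp]: "k < length es \<Longrightarrow> (exps es)(k := a) = exps (es[k := a])"
  by (auto simp: exps_def fun_eq_iff)

lemma gens_upd [simp]: "k < length gs \<Longrightarrow> (gens gs)(k := g) = gens (gs[k := g])"
  by (auto simp: gens_def fun_eq_iff)

lemma exps_eq_iff [simp]: "length es = length es' \<Longrightarrow> exps es = exps es' \<longleftrightarrow> es = es'"
  by (auto simp: exps_def fun_eq_iff intro: nth_equalityI)

lemma gens_eq_iff [simp]: "length gs = length gs' \<Longrightarrow> gens gs = gens gs' \<longleftrightarrow> gs = gs'"
  by (auto simp: gens_def fun_eq_iff intro: nth_equalityI)

lemma exps_zero: "exps [0, 0, 0, 0, 0] = (\<lambda>_. 0)"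
  by (auto simp: exps_def fun_eq_iff nth_Cons split: nat.split)

lemma gens_Emp: "gens [Emp, Emp, Emp] = (\<lambda>_. Emp)"
  by (auto simp: gens_def fun_eq_iff nth_Cons split: nat.split)

lemma Collect_insert_conj:
  "{w \<in> insert a A. P w} = (if P a then insert a {w \<in> A. P w} else {w \<in> A. P w})"
  by auto

lemma verts_Theta' [simp]: "verts Theta' = {0, 1, 2}"
  and edges_Theta' [simp]: "edges Theta' = {0, 1, 2, 3, 4}"
  and halves_Theta' [simp]: "halves Theta' = {0, 1, 2, 3, 4, 5, 6, 7, 8, 9}"
  and he_Theta' [simp]: "he Theta' = (\<lambda>h. h div 2)"
  and hv_Theta' [simp]: "hv Theta' = (\<lambda>h. if h < 6 then h mod 2
                        else if h = 6 then 0 else if h = 9 then 1 else 2)"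
  by (auto simp: Theta'_def)

lemma H_at_Theta': "H_at Theta' 0 = {0, 2, 4, 6}" "H_at Theta' 1 = {1, 3, 5, 9}" "H_at Theta' 2 = {7, 8}"
  unfolding H_at_def halves_Theta' hv_Theta' by (simp only: Collect_insert_conj; simp)+

lemma verts_Theta_v [simp]: "verts Theta_v = {0, 1, 17, 18}"
  by (auto simp: Theta_v_def explode_def H_at_Theta')

lemma edges_Theta_v [simp]: "edges Theta_v = {0, 1, 2, 3, 4}"
  and halves_Theta_v [simp]: "halves Theta_v = {0, 1, 2, 3, 4, 5, 6, 7, 8, 9}"
  and he_Theta_v [simp]: "he Theta_v = (\<lambda>h. h div 2)"
  by (auto simp: Theta_v_def explode_def)

lemma H_at_Theta_v: "H_at Theta_v 0 = {0, 2, 4, 6}" "H_at Theta_v (Suc 0) = {1, 3, 5, 9}"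
  unfolding H_at_def halves_Theta_v
  by (simp only: Collect_insert_conj; simp add: Theta_v_def explode_def)+

lemma bd_mono_Theta': "bd_mono Theta' (m, \<sigma>) b' =
   (case \<sigma> 0 of Hlf h \<Rightarrow>
      ind (m(h div 2 := m (h div 2) + 1), \<sigma>(0 := Emp)) b' - ind (m, \<sigma>(0 := Vtx)) b' | _ \<Rightarrow> 0)
 + (case \<sigma> 1 of Hlf h \<Rightarrow> (if isHlf (\<sigma> 0) then -1 else 1) *
      (ind (m(h div 2 := m (h div 2) + 1), \<sigma>(1 := Emp)) b' - ind (m, \<sigma>(1 := Vtx)) b') | _ \<Rightarrow> 0)
 + (case \<sigma> 2 of Hlf h \<Rightarrow> (if isHlf (\<sigma> 0) = isHlf (\<sigma> 1) then 1 else -1) *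
      (ind (m(h div 2 := m (h div 2) + 1), \<sigma>(2 := Emp)) b' - ind (m, \<sigma>(2 := Vtx)) b') | _ \<Rightarrow> 0)"
  unfolding bd_mono_def ksign_def verts_Theta'
  by (simp only: Collect_insert_conj) (simp split: gen.split)

text \<open>The new univalent vertices 17 and 18 come last in the vertex order, so
  the Koszul signs at \<open>u\<^sub>1\<close> and \<open>u\<^sub>2\<close> agree with those in \<open>\<Theta>'\<close>.\<close>

lemma bd_mono_Theta_v:
  assumes "\<sigma> 17 = Emp" and "\<sigma> 18 = Emp"
  shows "bd_mono Theta_v (m, \<sigma>) b' =
   (case \<sigma> 0 of Hlf h \<Rightarrow>
      ind (m(h div 2 := m (h div 2) + 1), \<sigma>(0 := Emp)) b' - ind (m, \<sigma>(0 := Vtx)) b' | _ \<Rightarrow> 0)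
 + (case \<sigma> 1 of Hlf h \<Rightarrow> (if isHlf (\<sigma> 0) then -1 else 1) *
      (ind (m(h div 2 := m (h div 2) + 1), \<sigma>(1 := Emp)) b' - ind (m, \<sigma>(1 := Vtx)) b') | _ \<Rightarrow> 0)"
  unfolding bd_mono_def ksign_def verts_Theta_v using assms
  by (simp only: Collect_insert_conj) (simp split: gen.split)

section \<open>A cycle of \<open>\<Theta>'\<close> lifting the star cycle\<close>

definition theta_cycle_terms :: "(int \<times> mono) list" where
  "theta_cycle_terms = [
    ( 1, (exps [1,0,0,0,0], gens [Hlf 2, Hlf 5, Emp])), (-1, (exps [1,0,0,0,0], gens [Hlf 2, Hlf 9, Emp])),
    (-1, (exps [1,0,0,0,0], gens [Hlf 2, Emp, Hlf 7])), ( 1, (exps [1,0,0,0,0], gens [Hlf 2, Emp, Hlf 8])),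
    (-1, (exps [1,0,0,0,0], gens [Hlf 4, Hlf 3, Emp])), ( 1, (exps [1,0,0,0,0], gens [Hlf 4, Hlf 9, Emp])),
    ( 1, (exps [1,0,0,0,0], gens [Hlf 4, Emp, Hlf 7])), (-1, (exps [1,0,0,0,0], gens [Hlf 4, Emp, Hlf 8])),
    ( 1, (exps [1,0,0,0,0], gens [Hlf 6, Hlf 3, Emp])), (-1, (exps [1,0,0,0,0], gens [Hlf 6, Hlf 5, Emp])),
    (-1, (exps [0,1,0,0,0], gens [Hlf 0, Hlf 5, Emp])), ( 1, (exps [0,1,0,0,0], gens [Hlf 0, Hlf 9, Emp])),
    ( 1, (exps [0,1,0,0,0], gens [Hlf 0, Emp, Hlf 7])), (-1, (exps [0,1,0,0,0], gens [Hlf 0, Emp, Hlf 8])),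
    ( 1, (exps [0,1,0,0,0], gens [Hlf 4, Hlf 1, Emp])), (-1, (exps [0,1,0,0,0], gens [Hlf 4, Hlf 9, Emp])),
    (-1, (exps [0,1,0,0,0], gens [Hlf 4, Emp, Hlf 7])), ( 1, (exps [0,1,0,0,0], gens [Hlf 4, Emp, Hlf 8])),
    (-1, (exps [0,1,0,0,0], gens [Hlf 6, Hlf 1, Emp])), ( 1, (exps [0,1,0,0,0], gens [Hlf 6, Hlf 5, Emp])),
    ( 1, (exps [0,0,1,0,0], gens [Hlf 0, Hlf 3, Emp])), (-1, (exps [0,0,1,0,0], gens [Hlf 0, Hlf 9, Emp])),
    (-1, (exps [0,0,1,0,0], gens [Hlf 0, Emp, Hlf 7])), ( 1, (exps [0,0,1,0,0], gens [Hlf 0, Emp, Hlf 8])),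
    (-1, (exps [0,0,1,0,0], gens [Hlf 2, Hlf 1, Emp])), ( 1, (exps [0,0,1,0,0], gens [Hlf 2, Hlf 9, Emp])),
    ( 1, (exps [0,0,1,0,0], gens [Hlf 2, Emp, Hlf 7])), (-1, (exps [0,0,1,0,0], gens [Hlf 2, Emp, Hlf 8])),
    ( 1, (exps [0,0,1,0,0], gens [Hlf 6, Hlf 1, Emp])), (-1, (exps [0,0,1,0,0], gens [Hlf 6, Hlf 3, Emp])),
    (-1, (exps [0,0,0,1,0], gens [Hlf 0, Hlf 3, Emp])), ( 1, (exps [0,0,0,1,0], gens [Hlf 0, Hlf 5, Emp])),
    ( 1, (exps [0,0,0,1,0], gens [Hlf 2, Hlf 1, Emp])), (-1, (exps [0,0,0,1,0], gens [Hlf 2, Hlf 5, Emp])),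
    (-1, (exps [0,0,0,1,0], gens [Hlf 4, Hlf 1, Emp])), ( 1, (exps [0,0,0,1,0], gens [Hlf 4, Hlf 3, Emp]))]"

definition theta_cycle :: chain where
  "theta_cycle = lincomb theta_cycle_terms"

lemma valid_mono_Theta':
  assumes "\<forall>h. g0 = Hlf h \<longrightarrow> h \<in> {0, 2, 4, 6}" and "\<forall>h. g1 = Hlf h \<longrightarrow> h \<in> {1, 3, 5, 9}"
    and "\<forall>h. g2 = Hlf h \<longrightarrow> h \<in> {7, 8}"
  shows "valid_mono Theta' (exps [a, b, c, d, e], gens [g0, g1, g2])"
  using assms unfolding valid_mono_def
  by (intro conjI allI impI) (auto simp: H_at_def exps_def gens_def nth_Cons split: if_splits nat.splits)

lemma mdeg_Theta':
  "mdeg Theta' (m, gens [g0, g1, g2]) = of_bool (isHlf g0) + of_bool (isHlf g1) + of_bool (isHlf g2)"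
  unfolding mdeg_def verts_Theta' by (simp only: Collect_insert_conj; simp)

lemma mwt_Theta': "mwt Theta' (exps [a, b, c, d, e], gens [g0, g1, g2]) =
   a + b + c + d + e + of_bool (g0 \<noteq> Emp) + of_bool (g1 \<noteq> Emp) + of_bool (g2 \<noteq> Emp)"
  unfolding mwt_def verts_Theta' edges_Theta' by (simp only: Collect_insert_conj; simp)

lemma is_cycle_theta_cycle: "is_cycle Theta' 2 3 theta_cycle"
proof -
  have terms: "\<forall>b\<in>snd ` set theta_cycle_terms. valid_mono Theta' b \<and> mdeg Theta' b = 2 \<and> mwt Theta' b = 3"
    unfolding theta_cycle_terms_def by (simp add: valid_mono_Theta' mdeg_Theta' mwt_Theta')
  have "supp theta_cycle \<subseteq> snd ` set theta_cycle_terms"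
    unfolding theta_cycle_def by (rule supp_lincomb)
  then have "is_chain Theta' 2 3 theta_cycle"
    unfolding is_chain_def using terms by (meson finite_imageI finite_set finite_subset subsetD)
  moreover have "bd Theta' theta_cycle = (\<lambda>_. 0)"
    unfolding theta_cycle_def theta_cycle_terms_def bd_lincomb by (simp add: bd_mono_Theta')
  ultimately show ?thesis by (simp add: is_cycle_def)
qed

lemma star_cycle_eq_lincomb: "star_cycle Theta_v 0 0 2 4 = lincomb
  [(1, (exps [0,0,1,0,0], gens [Hlf 0, Emp, Emp])), (-1, (exps [0,0,1,0,0], gens [Hlf 2, Emp, Emp])),
   (1, (exps [0,1,0,0,0], gens [Hlf 4, Emp, Emp])), (-1, (exps [0,1,0,0,0], gens [Hlf 0, Emp, Emp])),
   (1, (exps [1,0,0,0,0], gens [Hlf 2, Emp, Emp])), (-1, (exps [1,0,0,0,0], gens [Hlf 4, Emp, Emp]))]"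
proof -
  have "(\<lambda>_. 0::nat)(e := 1) = (exps [0,0,0,0,0])(e := 1)" "(\<lambda>_. Emp)(w := g) = (gens [Emp,Emp,Emp])(w := g)"
    for e w g
    by (simp_all add: exps_zero gens_Emp)
  then show ?thesis
    unfolding star_cycle_def lincomb_def Let_def he_Theta_v by (intro ext) simp
qed

lemma psi_theta_cycle: "psi 2 8 theta_cycle = star_cycle Theta_v 0 0 2 4"
proof
  fix b :: mono
  obtain m \<sigma> where b: "b = (m, \<sigma>)" by (cases b)
  show "psi 2 8 theta_cycle b = star_cycle Theta_v 0 0 2 4 b"
  proof (cases "\<sigma> 2 = Emp")
    case True
    then show ?thesis
      unfolding b psi_def star_cycle_eq_lincomb theta_cycle_def lincomb_def theta_cycle_terms_def
      by (simp add: ind_fun_upd_Hlf)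
  next
    case False
    then show ?thesis
      unfolding b psi_def star_cycle_eq_lincomb lincomb_def by (auto simp: ind_def)
  qed
qed

section \<open>Top-degree chains of \<open>\<Theta>'\<close>\<close>

lemma top_monomial_Theta':
  assumes "valid_mono Theta' b" and "mdeg Theta' b = 3" and "mwt Theta' b = 3"
  shows "\<exists>x y z. b = (exps [0,0,0,0,0], gens [Hlf x, Hlf y, Hlf z]) \<and>
           x \<in> {0, 2, 4, 6} \<and> y \<in> {1, 3, 5, 9} \<and> z \<in> {7, 8}"
proof -
  obtain m \<tau> where b: "b = (m, \<tau>)" by (cases b)
  have edge: "m e \<noteq> 0 \<Longrightarrow> e \<in> {0, 1, 2, 3, 4}" for e
    using assms(1) unfolding valid_mono_def b by simp
  have vert: "w \<notin> {0, 1, 2} \<Longrightarrow> \<tau> w = Emp" for w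
    using assms(1) unfolding valid_mono_def b by simp
  have half: "\<tau> w = Hlf h \<Longrightarrow> h \<in> H_at Theta' w" for w h
    using assms(1) unfolding valid_mono_def b by simp
  have "card {w \<in> {0, 1, 2::nat}. isHlf (\<tau> w)} = card {0, 1, 2::nat}"
    using assms(2) unfolding mdeg_def b by simp
  then have "{w \<in> {0, 1, 2}. isHlf (\<tau> w)} = {0, 1, 2::nat}"
    by (intro card_subset_eq) auto
  then obtain x y z where xyz: "\<tau> 0 = Hlf x" "\<tau> 1 = Hlf y" "\<tau> 2 = Hlf z"
    by (metis (mono_tags) insertCI isHlf.elims(2) mem_Collect_eq)
  moreover have "{w \<in> {0, 1, 2::nat}. \<tau> w \<noteq> Emp} = {0, 1, 2}"
    using xyz by auto
  ultimately have "(\<Sum>e\<in>{0, 1, 2, 3, 4::nat}. m e) = 0"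
    using assms(3) unfolding mwt_def b by simp
  then have "m = exps [0,0,0,0,0]"
    using edge by (auto simp: exps_zero fun_eq_iff)
  moreover have "\<tau> = gens [Hlf x, Hlf y, Hlf z]"
    using xyz vert by (auto simp: fun_eq_iff gens_def numeral_2_eq_2 less_Suc_eq)
  moreover have "x \<in> {0, 2, 4, 6}" "y \<in> {1, 3, 5, 9}" "z \<in> {7, 8}"
    using half[OF xyz(1)] half[OF xyz(2)] half[OF xyz(3)] unfolding H_at_Theta' by blast+
  ultimately show ?thesis
    unfolding b by blast
qed

lemma top_chain_Theta'_supp:
  "is_chain Theta' 3 3 D \<Longrightarrow> b \<in> supp D \<Longrightarrow>
   \<exists>x y z. b = (exps [0,0,0,0,0], gens [Hlf x, Hlf y, Hlf z]) \<and>
           x \<in> {0, 2, 4, 6} \<and> y \<in> {1, 3, 5, 9} \<and> z \<in> {7, 8}"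
  unfolding is_chain_def using top_monomial_Theta' by blast

lemma bd_mono_Theta'_fun_upd_Hlf8:
  assumes "\<sigma> 2 = Emp" and "\<tau> 17 = Emp" and "\<tau> 18 = Emp"
  shows "bd_mono Theta' (m, \<tau>) (m', \<sigma>(2 := Hlf 8)) =
    (if \<tau> 2 = Hlf 8 then bd_mono Theta_v (m, \<tau>(2 := Emp)) (m', \<sigma>) else 0)"
  using assms
  by (simp add: bd_mono_Theta' bd_mono_Theta_v ind_fun_upd_Hlf fun_upd_twist[of 0 2]
      fun_upd_twist[of "Suc 0" 2] split: gen.split)

lemma bd_mono_Theta_v_vanish:
  assumes "\<sigma> 17 = Emp" and "\<sigma> 18 = Emp" and "\<sigma> 2 = Emp" and "snd c 2 \<noteq> Emp"
  shows "bd_mono Theta_v (m, \<sigma>) c = 0"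
  using assms by (simp add: bd_mono_Theta_v ind_eq_0_of_snd_ne[where v = 2] split: gen.split)

lemma psi_bd_top_chain_Theta':
  assumes D: "is_chain Theta' 3 3 D"
  shows "psi 2 8 (bd Theta' D) = bd Theta_v (psi 2 8 D)"
proof (rule psi_bd_eq_bd_psi)
  show "finite (supp D)" using D by (simp add: is_chain_def)
next
  fix b m and \<sigma> :: "nat \<Rightarrow> gen"
  assume "b \<in> supp D" and "\<sigma> 2 = Emp"
  moreover obtain x y z where "b = (exps [0,0,0,0,0], gens [Hlf x, Hlf y, Hlf z])"
    using top_chain_Theta'_supp[OF D \<open>b \<in> supp D\<close>] by blast
  ultimately show "bd_mono Theta' b (m, \<sigma>(2 := Hlf 8)) =
      (if snd b 2 = Hlf 8 then bd_mono Theta_v (clear_at 2 b) (m, \<sigma>) else 0)"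
    using bd_mono_Theta'_fun_upd_Hlf8 by (simp add: clear_at_def)
next
  fix b and c :: mono
  assume "b \<in> supp D" and "snd c 2 \<noteq> Emp"
  moreover obtain x y z where "b = (exps [0,0,0,0,0], gens [Hlf x, Hlf y, Hlf z])"
    using top_chain_Theta'_supp[OF D \<open>b \<in> supp D\<close>] by blast
  ultimately show "bd_mono Theta_v (clear_at 2 b) c = 0"
    using bd_mono_Theta_v_vanish by (simp add: clear_at_def)
qed

lemma psi_top_chain_Theta'_supp:
  assumes "is_chain Theta' 3 3 D" and "c \<in> supp (psi 2 8 D)"
  shows "\<exists>x y. c = (exps [0,0,0,0,0], gens [Hlf x, Hlf y, Emp]) \<and> x \<in> {0, 2, 4, 6} \<and> y \<in> {1, 3, 5, 9}"
  using assms top_chain_Theta'_supp by (fastforce simp: supp_psi clear_at_def)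

lemma is_chain_psi_top_chain_Theta':
  assumes D: "is_chain Theta' 3 3 D"
  shows "is_chain Theta_v 2 2 (psi 2 8 D)"
  unfolding is_chain_def
proof
  show "finite (supp (psi 2 8 D))"
    using D by (simp add: is_chain_def supp_psi)
  have mono_props: "valid_mono Theta_v (exps [0,0,0,0,0], gens [Hlf x, Hlf y, Emp])"
    and mono_deg: "mdeg Theta_v (exps [0,0,0,0,0], gens [Hlf x, Hlf y, Emp]) = 2"
    and mono_wt: "mwt Theta_v (exps [0,0,0,0,0], gens [Hlf x, Hlf y, Emp]) = 2"
    if "x \<in> {0, 2, 4, 6}" and "y \<in> {1, 3, 5, 9}" for x y
  proof -
    show "valid_mono Theta_v (exps [0,0,0,0,0], gens [Hlf x, Hlf y, Emp])"
      using that unfolding valid_mono_def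
      by (auto simp: exps_zero gens_def nth_Cons H_at_Theta_v split: if_splits nat.splits)
    show "mdeg Theta_v (exps [0,0,0,0,0], gens [Hlf x, Hlf y, Emp]) = 2"
      unfolding mdeg_def verts_Theta_v by (simp only: Collect_insert_conj; simp)
    show "mwt Theta_v (exps [0,0,0,0,0], gens [Hlf x, Hlf y, Emp]) = 2"
      unfolding mwt_def verts_Theta_v edges_Theta_v by (simp only: Collect_insert_conj; simp)
  qed
  show "\<forall>c\<in>supp (psi 2 8 D). valid_mono Theta_v c \<and> mdeg Theta_v c = 2 \<and> mwt Theta_v c = 2"
  proof
    fix c assume "c \<in> supp (psi 2 8 D)"
    then obtain x y where "c = (exps [0,0,0,0,0], gens [Hlf x, Hlf y, Emp])"
      and "x \<in> {0, 2, 4, 6}" and "y \<in> {1, 3, 5, 9}"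
      using psi_top_chain_Theta'_supp[OF D] by blast
    then show "valid_mono Theta_v c \<and> mdeg Theta_v c = 2 \<and> mwt Theta_v c = 2"
      using mono_props mono_deg mono_wt by simp
  qed
qed

section \<open>A functional detecting the star class\<close>

definition star_test :: "chain \<Rightarrow> int" where
  "star_test c = c (exps [0,1,0,0,0], gens [Hlf 0, Emp, Emp]) + c (exps [1,0,0,0,0], gens [Emp, Hlf 3, Emp])"

lemma star_test_diff_scale: "star_test (\<lambda>b. c b - k * d b) = star_test c - k * star_test d"
  by (simp add: star_test_def algebra_simps)

lemma star_test_star_cycle: "star_test (star_cycle Theta_v 0 0 2 4) = -1"
  by (simp add: star_test_def star_cycle_eq_lincomb lincomb_def ind_def)

lemma star_test_bd_psi_top_chain_Theta':
  assumes D: "is_chain Theta' 3 3 D"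
  shows "star_test (bd Theta_v (psi 2 8 D)) = 0"
proof -
  let ?t = "\<lambda>b. bd_mono Theta_v b (exps [0,1,0,0,0], gens [Hlf 0, Emp, Emp])
              + bd_mono Theta_v b (exps [1,0,0,0,0], gens [Emp, Hlf 3, Emp])"
  have "star_test (bd Theta_v (psi 2 8 D)) = (\<Sum>b\<in>supp (psi 2 8 D). psi 2 8 D b * ?t b)"
    by (simp add: star_test_def bd_def sum.distrib[symmetric] distrib_left)
  also have "\<dots> = 0"
  proof (rule sum.neutral, rule ballI)
    fix b assume "b \<in> supp (psi 2 8 D)"
    then obtain x y where "b = (exps [0,0,0,0,0], gens [Hlf x, Hlf y, Emp])"
      and "x \<in> {0, 2, 4, 6}" and "y \<in> {1, 3, 5, 9}"
      using psi_top_chain_Theta'_supp[OF D] by blast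
    then show "psi 2 8 D b * ?t b = 0"
      by (auto simp: bd_mono_Theta_v ind_def)
  qed
  finally show ?thesis .
qed

theorem mainTheorem5:
  fixes z :: chain
  assumes z_red: "reduced_at 2 7 8 z"
    and z_cyc: "is_cycle Theta' 2 3 z"
    and z_gen: "\<forall>c. is_cycle Theta' 2 3 c \<longrightarrow>
                   (\<exists>n::int. homologous Theta' 2 3 c (\<lambda>b. n * z b))"
  shows "\<exists>\<epsilon>::int. (\<epsilon> = 1 \<or> \<epsilon> = -1) \<and>
           homologous Theta_v 1 2 (psi 2 8 z) (\<lambda>b. \<epsilon> * star_cycle Theta_v 0 0 2 4 b)"
proof -
  obtain n :: int where "homologous Theta' 2 3 theta_cycle (\<lambda>b. n * z b)"
    using z_gen is_cycle_theta_cycle by blast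
  then obtain D where D: "is_chain Theta' 3 3 D" and "(\<lambda>b. theta_cycle b - n * z b) = bd Theta' D"
    by (auto simp: homologous_def numeral_3_eq_3)
  then have bd_psi_D: "(\<lambda>b. star_cycle Theta_v 0 0 2 4 b - n * psi 2 8 z b) = bd Theta_v (psi 2 8 D)"
    using psi_diff_scale[of 2 8 theta_cycle n z] by (simp add: psi_theta_cycle psi_bd_top_chain_Theta')
  then have "-1 - n * star_test (psi 2 8 z) = 0"
    using star_test_bd_psi_top_chain_Theta'[OF D]
    by (simp add: star_test_diff_scale star_test_star_cycle flip: bd_psi_D)
  then have n: "n = 1 \<or> n = -1"
    using zmult_eq_neg1_iff by auto
  have psi_D: "is_chain Theta_v (Suc 1) 2 (psi 2 8 D)"
    using is_chain_psi_top_chain_Theta'[OF D] by (simp add: numeral_2_eq_2)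
  have "homologous Theta_v 1 2 (psi 2 8 z) (\<lambda>b. n * star_cycle Theta_v 0 0 2 4 b)"
    by (rule homologous_unit_swap[OF n psi_D bd_psi_D])
  then show ?thesis
    using n by blast
qed

end
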